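(* If $\mathcal{P}$ and $\mathcal{Q}$ are ranked finite posets, then $\mathcal{M}(\mathcal{P}\times\mathcal{Q},t)=\mathcal{M}(\mathcal{P},t)\,\mathcal{M}(\mathcal{Q},t)$.
   Context: $\mathcal{P}\times\mathcal{Q}$ carries the product order $(x_1,x_2)\le(y_1,y_2)$ iff $x_1\le y_1$ and $x_2\le y_2$, with rank $\mathrm{rk}(x_1,x_2)=\mathrm{rk}(x_1)+\mathrm{rk}(x_2)$. For a finite ranked poset $\mathcal{R}$, $\mathrm{rk}(\mathcal{R})$ is the maximum rank of an element and $\rho(x,y,z)=3\,\mathrm{rk}(\mathcal{R})-\mathrm{rk}(x)-\mathrm{rk}(y)-\mathrm{rk}(z)$. Let $\delta_3(x,y,z)=1$ if $x=y=z$ and $0$ otherwise, and $J=J_\mathcal{R}$ the unique integer-valued function on triples $x\le y\le z$ of $\mathcal{R}$ with $\sum_{x\le a\le y\le b\le z}J(a,y,b)=\delta_3(x,y,z)$ for all $x\le y\le z$. Then $\mathcal{M}(\mathcal{R},t)=\sum_{x\le y\le z}J(x,y,z)\,t^{\rho(x,y,z)}$. *)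

theory Defs
  imports Main "HOL-Computational_Algebra.Polynomial"
begin

definition finite_poset :: "'a set \<Rightarrow> ('a \<Rightarrow> 'a \<Rightarrow> bool) \<Rightarrow> bool" where
  "finite_poset A le \<longleftrightarrow> finite A
     \<and> (\<forall>x\<in>A. le x x)
     \<and> (\<forall>x\<in>A. \<forall>y\<in>A. le x y \<and> le y x \<longrightarrow> x = y)
     \<and> (\<forall>x\<in>A. \<forall>y\<in>A. \<forall>z\<in>A. le x y \<and> le y z \<longrightarrow> le x z)"

definition covers :: "'a set \<Rightarrow> ('a \<Rightarrow> 'a \<Rightarrow> bool) \<Rightarrow> 'a \<Rightarrow> 'a \<Rightarrow> bool" where
  "covers A le x y \<longleftrightarrow> x \<in> A \<and> y \<in> A \<and> le x y \<and> x \<noteq> y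
     \<and> \<not> (\<exists>z\<in>A. le x z \<and> le z y \<and> z \<noteq> x \<and> z \<noteq> y)"

definition ranked_finite_poset ::
    "'a set \<Rightarrow> ('a \<Rightarrow> 'a \<Rightarrow> bool) \<Rightarrow> ('a \<Rightarrow> nat) \<Rightarrow> bool" where
  "ranked_finite_poset A le rk \<longleftrightarrow> finite_poset A le
     \<and> (\<forall>x\<in>A. (\<forall>z\<in>A. le z x \<longrightarrow> z = x) \<longrightarrow> rk x = 0)
     \<and> (\<forall>x y. covers A le x y \<longrightarrow> rk y = rk x + 1)"

definition prod_le :: "('a \<Rightarrow> 'a \<Rightarrow> bool) \<Rightarrow> ('b \<Rightarrow> 'b \<Rightarrow> bool)
    \<Rightarrow> ('a \<times> 'b) \<Rightarrow> ('a \<times> 'b) \<Rightarrow> bool" where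
  "prod_le le1 le2 p q \<longleftrightarrow> le1 (fst p) (fst q) \<and> le2 (snd p) (snd q)"

definition prod_rk :: "('a \<Rightarrow> nat) \<Rightarrow> ('b \<Rightarrow> nat) \<Rightarrow> ('a \<times> 'b) \<Rightarrow> nat" where
  "prod_rk rk1 rk2 p = rk1 (fst p) + rk2 (snd p)"

definition poset_rank :: "'a set \<Rightarrow> ('a \<Rightarrow> nat) \<Rightarrow> nat" where
  "poset_rank A rk = Max (rk ` A)"

definition chains3 :: "'a set \<Rightarrow> ('a \<Rightarrow> 'a \<Rightarrow> bool) \<Rightarrow> ('a \<times> 'a \<times> 'a) set" where
  "chains3 A le = {(x, y, z). x \<in> A \<and> y \<in> A \<and> z \<in> A \<and> le x y \<and> le y z}"

definition delta3 :: "'a \<Rightarrow> 'a \<Rightarrow> 'a \<Rightarrow> int" where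
  "delta3 x y z = (if x = y \<and> y = z then 1 else 0)"

text \<open>The function J: the unique integer-valued function on triples x \<le> y \<le> z with
  sum over x \<le> a \<le> y \<le> b \<le> z of J(a,y,b) equal to delta3(x,y,z).
  (Outside the triples it is normalised to 0 to make it unique as a HOL function.)\<close>

definition Jfun :: "'a set \<Rightarrow> ('a \<Rightarrow> 'a \<Rightarrow> bool) \<Rightarrow> 'a \<Rightarrow> 'a \<Rightarrow> 'a \<Rightarrow> int" where
  "Jfun A le = (THE J.
      (\<forall>x y z. (x, y, z) \<notin> chains3 A le \<longrightarrow> J x y z = 0)
    \<and> (\<forall>x y z. (x, y, z) \<in> chains3 A le \<longrightarrow>
        (\<Sum>(a, b) \<in> {(a, b). a \<in> A \<and> b \<in> A \<and> le x a \<and> le a y \<and> le y b \<and> le b z}.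
            J a y b) = delta3 x y z))"

text \<open>rho(x,y,z) = 3 rk(R) - rk x - rk y - rk z, written as a sum of nonnegative terms.\<close>

definition rho :: "'a set \<Rightarrow> ('a \<Rightarrow> nat) \<Rightarrow> 'a \<Rightarrow> 'a \<Rightarrow> 'a \<Rightarrow> nat" where
  "rho A rk x y z = (poset_rank A rk - rk x) + (poset_rank A rk - rk y) + (poset_rank A rk - rk z)"

definition Mpoly :: "'a set \<Rightarrow> ('a \<Rightarrow> 'a \<Rightarrow> bool) \<Rightarrow> ('a \<Rightarrow> nat) \<Rightarrow> int poly" where
  "Mpoly A le rk = (\<Sum>(x, y, z) \<in> chains3 A le. monom (Jfun A le x y z) (rho A rk x y z))"

end

theory Submission
  imports Defs
begin

(* The defining equations of J form a unitriangular system indexed by the chains x <= y <= z: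
   the equation of (x, y, z) involves exactly the unknowns J(a, y, b) with x <= a <= y <= b <= z,
   which form the down-set of (x, y, z) for a partial order on chains. Such a system has a unique
   solution, obtained by solving it from the bottom up, so J is well defined and characterised by
   its equations. In P x Q every interval is a product of intervals and delta_3 is multiplicative,
   hence (p, q, r) |-> J_P(p1, q1, r1) * J_Q(p2, q2, r2) satisfies the equations of P x Q and is
   therefore J_(P x Q). Since rk(P x Q) = rk P + rk Q, rho is additive along the bijection between
   chains of P x Q and pairs of chains, and M factorises. *)

definition solves_triangular ::
    "'s set \<Rightarrow> ('s \<Rightarrow> 's set) \<Rightarrow> ('s \<Rightarrow> 'b::comm_monoid_add) \<Rightarrow> ('s \<Rightarrow> 'b) \<Rightarrow> bool" where
  "solves_triangular S I c J \<longleftrightarrow> (\<forall>t. t \<notin> S \<longrightarrow> J t = 0) \<and> (\<forall>s\<in>S. sum J (I s) = c s)"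

lemma ex1_solves_triangular_insert:
  fixes c :: "'s \<Rightarrow> 'b::ab_group_add"
  assumes ex1: "\<exists>!J. solves_triangular T I c J"
    and "x \<notin> T" "x \<in> I x" "finite (I x)"
    and x_maximal: "\<And>s. s \<in> T \<Longrightarrow> x \<notin> I s"
  shows "\<exists>!J. solves_triangular (insert x T) I c J"
proof -
  obtain J0 where J0: "solves_triangular T I c J0"
    and J0_unique: "\<And>J. solves_triangular T I c J \<Longrightarrow> J = J0"
    using ex1 by blast
  have split_x: "sum J (I x) = J x + sum J (I x - {x})" for J :: "'s \<Rightarrow> 'b"
    using assms(3,4) by (simp add: sum.remove)
  define J where "J = J0(x := c x - sum J0 (I x - {x}))"
  have J_other: "J t = J0 t" if "t \<noteq> x" for t
    using that by (simp add: J_def)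
  have J0_T: "\<forall>t. t \<notin> T \<longrightarrow> J0 t = 0" "\<forall>s\<in>T. sum J0 (I s) = c s"
    using J0 by (simp_all add: solves_triangular_def)
  have J_T: "sum J (I s) = c s" if "s \<in> T" for s
  proof -
    have "sum J (I s) = sum J0 (I s)"
      using x_maximal[OF that] by (intro sum.cong refl J_other) blast
    with J0_T that show ?thesis by simp
  qed
  have J_x: "sum J (I x) = c x"
  proof -
    have "sum J (I x - {x}) = sum J0 (I x - {x})"
      by (intro sum.cong refl J_other) blast
    then show ?thesis using split_x[of J] by (simp add: J_def)
  qed
  show ?thesis
  proof (rule ex1I)
    show "solves_triangular (insert x T) I c J"
      using J_T J_x J_other J0_T by (auto simp: solves_triangular_def)
  next
    fix J' assume J': "solves_triangular (insert x T) I c J'"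
    have "solves_triangular T I c (J'(x := 0))"
    proof -
      have "sum (J'(x := 0)) (I s) = sum J' (I s)" if "s \<in> T" for s
        using x_maximal[OF that] by (intro sum.cong) auto
      then show ?thesis using J' by (simp add: solves_triangular_def)
    qed
    then have off_x: "J'(x := 0) = J0" by (rule J0_unique)
    then have J'_other: "J' t = J t" if "t \<noteq> x" for t
      using that J_other by (metis fun_upd_other)
    have "sum J' (I x - {x}) = sum J (I x - {x})"
      by (intro sum.cong refl J'_other) blast
    moreover have "sum J' (I x) = sum J (I x)"
      using J' J_x by (simp add: solves_triangular_def)
    ultimately have "J' x = J x" using split_x[of J'] split_x[of J] by simp
    with J'_other show "J' = J" by (metis ext)
  qed
qed

lemma ex1_solves_triangular:
  fixes c :: "'s \<Rightarrow> 'b::ab_group_add"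
  assumes "finite S"
    and refl: "\<And>s. s \<in> S \<Longrightarrow> s \<in> I s"
    and closed: "\<And>s. s \<in> S \<Longrightarrow> I s \<subseteq> S"
    and trans: "\<And>s t. s \<in> S \<Longrightarrow> t \<in> I s \<Longrightarrow> I t \<subseteq> I s"
    and antisym: "\<And>s t. s \<in> S \<Longrightarrow> t \<in> I s \<Longrightarrow> s \<in> I t \<Longrightarrow> t = s"
  shows "\<exists>!J. solves_triangular S I c J"
proof -
  have fin: "finite (I s)" if "s \<in> S" for s
    using closed[OF that] \<open>finite S\<close> by (rule finite_subset)
  have ex1_downclosed: "\<exists>!J. solves_triangular T I c J"
    if "finite T" "T \<subseteq> S" "\<forall>s\<in>T. I s \<subseteq> T" for T
    using that
  proof (induction T rule: finite_ranking_induct[where f = "\<lambda>s. card (I s)"])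
    case empty
    have "solves_triangular {} I c J \<longleftrightarrow> J = (\<lambda>_. 0)" for J
      by (auto simp: solves_triangular_def)
    then show ?case by simp
  next
    case (insert x T)
    note sub = insert.prems(1) and down = insert.prems(2)
    show ?case
    proof (cases "x \<in> T")
      case True
      then show ?thesis using insert.IH sub down by (simp add: insert_absorb)
    next
      case False
      have x_maximal: "x \<notin> I s" if "s \<in> T" for s
      proof
        assume "x \<in> I s"
        have "s \<in> S" "s \<noteq> x" using sub that False by auto
        have "I x \<subseteq> I s" using \<open>s \<in> S\<close> \<open>x \<in> I s\<close> by (rule trans)
        moreover have "s \<notin> I x" using antisym[OF \<open>s \<in> S\<close> \<open>x \<in> I s\<close>] \<open>s \<noteq> x\<close> by blast
        moreover have "s \<in> I s" using \<open>s \<in> S\<close> by (rule refl)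
        ultimately have "I x \<subset> I s" by blast
        then have "card (I x) < card (I s)"
          using fin[OF \<open>s \<in> S\<close>] by (rule psubset_card_mono[rotated])
        with insert.hyps(2)[OF that] show False by simp
      qed
      then have "\<forall>s\<in>T. I s \<subseteq> T" using down by blast
      then have ex1_T: "\<exists>!J. solves_triangular T I c J" using insert.IH sub by blast
      have "x \<in> S" using sub by simp
      then show ?thesis
        using ex1_solves_triangular_insert[OF ex1_T False refl fin x_maximal] by simp
    qed
  qed
  show ?thesis
    using closed by (intro ex1_downclosed[OF assms(1) order_refl]) blast
qed

lemma finite_posetD:
  assumes "finite_poset A le"
  shows "finite A"
    and "x \<in> A \<Longrightarrow> le x x"
    and "x \<in> A \<Longrightarrow> y \<in> A \<Longrightarrow> le x y \<Longrightarrow> le y x \<Longrightarrow> x = y"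
    and "x \<in> A \<Longrightarrow> y \<in> A \<Longrightarrow> z \<in> A \<Longrightarrow> le x y \<Longrightarrow> le y z \<Longrightarrow> le x z"
  using assms unfolding finite_poset_def by blast+

definition poset_interval :: "'a set \<Rightarrow> ('a \<Rightarrow> 'a \<Rightarrow> bool) \<Rightarrow> 'a \<Rightarrow> 'a \<Rightarrow> 'a set" where
  "poset_interval A le x y = {a \<in> A. le x a \<and> le a y}"

definition is_Jfun :: "'a set \<Rightarrow> ('a \<Rightarrow> 'a \<Rightarrow> bool) \<Rightarrow> ('a \<Rightarrow> 'a \<Rightarrow> 'a \<Rightarrow> int) \<Rightarrow> bool" where
  "is_Jfun A le J \<longleftrightarrow> (\<forall>x y z. (x, y, z) \<notin> chains3 A le \<longrightarrow> J x y z = 0)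
     \<and> (\<forall>x y z. (x, y, z) \<in> chains3 A le \<longrightarrow>
          (\<Sum>(a, b) \<in> poset_interval A le x y \<times> poset_interval A le y z. J a y b) = delta3 x y z)"

lemma Jfun_eq_The_is_Jfun: "Jfun A le = (THE J. is_Jfun A le J)"
proof -
  have "{(a, b). a \<in> A \<and> b \<in> A \<and> le x a \<and> le a y \<and> le y b \<and> le b z}
      = poset_interval A le x y \<times> poset_interval A le y z" for x y z
    by (auto simp: poset_interval_def)
  then show ?thesis unfolding Jfun_def is_Jfun_def by simp
qed

definition chain_downset :: "'a set \<Rightarrow> ('a \<Rightarrow> 'a \<Rightarrow> bool) \<Rightarrow> 'a \<times> 'a \<times> 'a \<Rightarrow> ('a \<times> 'a \<times> 'a) set" where
  "chain_downset A le =
     (\<lambda>(x, y, z). (\<lambda>(a, b). (a, y, b)) ` (poset_interval A le x y \<times> poset_interval A le y z))"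

lemma mem_chain_downset:
  "(a, y', b) \<in> chain_downset A le (x, y, z) \<longleftrightarrow>
     y' = y \<and> a \<in> A \<and> b \<in> A \<and> le x a \<and> le a y \<and> le y b \<and> le b z"
  by (auto simp: chain_downset_def poset_interval_def)

lemma is_Jfun_iff_solves_triangular:
  "is_Jfun A le J \<longleftrightarrow>
     solves_triangular (chains3 A le) (chain_downset A le) (\<lambda>(x, y, z). delta3 x y z) (\<lambda>(x, y, z). J x y z)"
proof -
  have row_sum: "sum (\<lambda>(x, y, z). J x y z) (chain_downset A le (x, y, z))
      = (\<Sum>(a, b) \<in> poset_interval A le x y \<times> poset_interval A le y z. J a y b)" for x y z
    unfolding chain_downset_def prod.case by (subst sum.reindex) (auto simp: inj_on_def intro!: sum.cong)
  show ?thesis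
    unfolding is_Jfun_def solves_triangular_def Ball_def split_paired_All prod.case row_sum ..
qed

lemma ex1_solves_triangular_chains3:
  fixes c :: "'a \<times> 'a \<times> 'a \<Rightarrow> 'b::ab_group_add"
  assumes "finite_poset A le"
  shows "\<exists>!J. solves_triangular (chains3 A le) (chain_downset A le) c J"
proof (rule ex1_solves_triangular)
  note refl = finite_posetD(2)[OF assms] and antisym = finite_posetD(3)[OF assms]
    and trans = finite_posetD(4)[OF assms]
  have "chains3 A le \<subseteq> A \<times> A \<times> A"
    by (auto simp: chains3_def)
  then show "finite (chains3 A le)"
    using finite_posetD(1)[OF assms] by (simp add: finite_subset)
  fix s assume "s \<in> chains3 A le"
  then obtain x y z where s: "s = (x, y, z)" and xyz: "x \<in> A" "y \<in> A" "z \<in> A" "le x y" "le y z"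
    by (auto simp: chains3_def)
  show "s \<in> chain_downset A le s"
    using xyz refl by (simp add: s mem_chain_downset)
  show "chain_downset A le s \<subseteq> chains3 A le"
    using xyz by (auto simp: s chains3_def chain_downset_def poset_interval_def)
  fix t assume "t \<in> chain_downset A le s"
  then obtain a b where t: "t = (a, y, b)"
    and ab: "a \<in> A" "b \<in> A" "le x a" "le a y" "le y b" "le b z"
    by (cases t) (auto simp: s mem_chain_downset)
  show "chain_downset A le t \<subseteq> chain_downset A le s"
  proof
    fix u assume "u \<in> chain_downset A le t"
    then obtain a' b' where u: "u = (a', y, b')"
      and a'b': "a' \<in> A" "b' \<in> A" "le a a'" "le a' y" "le y b'" "le b' b"
      by (cases u) (auto simp: t mem_chain_downset)
    have "le x a'" "le b' z"
      using trans[of x a a'] trans[of b' b z] xyz ab a'b' by simp_all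
    then show "u \<in> chain_downset A le s"
      using a'b' by (simp add: s u mem_chain_downset)
  qed
  show "t = s" if "s \<in> chain_downset A le t"
  proof -
    have "le a x" "le z b"
      using that by (simp_all add: s t mem_chain_downset)
    then show ?thesis
      using antisym[of x a] antisym[of b z] xyz ab by (simp add: s t)
  qed
qed

lemma ex1_is_Jfun:
  assumes "finite_poset A le"
  shows "\<exists>!J. is_Jfun A le J"
proof -
  obtain J' where J': "solves_triangular (chains3 A le) (chain_downset A le) (\<lambda>(x, y, z). delta3 x y z) J'"
    and J'_unique: "\<And>J. solves_triangular (chains3 A le) (chain_downset A le) (\<lambda>(x, y, z). delta3 x y z) J
      \<Longrightarrow> J = J'"
    using ex1_solves_triangular_chains3[OF assms] by blast
  show ?thesis
  proof (rule ex1I)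
    show "is_Jfun A le (\<lambda>x y z. J' (x, y, z))"
      using J' by (simp add: is_Jfun_iff_solves_triangular case_prod_beta')
  next
    fix J assume "is_Jfun A le J"
    then have "(\<lambda>(x, y, z). J x y z) = J'"
      by (intro J'_unique) (simp add: is_Jfun_iff_solves_triangular)
    then show "J = (\<lambda>x y z. J' (x, y, z))" by (auto simp: fun_eq_iff)
  qed
qed

lemma is_Jfun_Jfun: "finite_poset A le \<Longrightarrow> is_Jfun A le (Jfun A le)"
  unfolding Jfun_eq_The_is_Jfun by (rule theI'[OF ex1_is_Jfun])

lemma Jfun_unique: "finite_poset A le \<Longrightarrow> is_Jfun A le J \<Longrightarrow> Jfun A le = J"
  unfolding Jfun_eq_The_is_Jfun by (rule the1_equality[OF ex1_is_Jfun])

lemma finite_poset_prod: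
  assumes P: "finite_poset P leP" and Q: "finite_poset Q leQ"
  shows "finite_poset (P \<times> Q) (prod_le leP leQ)"
  unfolding finite_poset_def
proof (intro conjI ballI impI)
  show "finite (P \<times> Q)"
    using finite_posetD(1)[OF P] finite_posetD(1)[OF Q] by simp
  fix u v w assume uvw: "u \<in> P \<times> Q" "v \<in> P \<times> Q" "w \<in> P \<times> Q"
  show "prod_le leP leQ u u"
    using uvw finite_posetD(2)[OF P] finite_posetD(2)[OF Q] by (auto simp: prod_le_def)
  show "u = v" if "prod_le leP leQ u v \<and> prod_le leP leQ v u"
    using that uvw finite_posetD(3)[OF P, of "fst u" "fst v"] finite_posetD(3)[OF Q, of "snd u" "snd v"]
    by (auto simp: prod_le_def prod_eq_iff)
  show "prod_le leP leQ u w" if "prod_le leP leQ u v \<and> prod_le leP leQ v w"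
    using that uvw finite_posetD(4)[OF P, of "fst u" "fst v" "fst w"]
      finite_posetD(4)[OF Q, of "snd u" "snd v" "snd w"]
    by (auto simp: prod_le_def)
qed

lemma poset_interval_prod:
  "poset_interval (P \<times> Q) (prod_le leP leQ) (x1, x2) (y1, y2)
     = poset_interval P leP x1 y1 \<times> poset_interval Q leQ x2 y2"
  by (auto simp: poset_interval_def prod_le_def)

lemma chains3_prod_iff:
  "((x1, x2), (y1, y2), (z1, z2)) \<in> chains3 (P \<times> Q) (prod_le leP leQ)
     \<longleftrightarrow> (x1, y1, z1) \<in> chains3 P leP \<and> (x2, y2, z2) \<in> chains3 Q leQ"
  by (auto simp: chains3_def prod_le_def)

lemma delta3_prod: "delta3 (x1, x2) (y1, y2) (z1, z2) = delta3 x1 y1 z1 * delta3 x2 y2 z2"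
  by (simp add: delta3_def)

lemma sum_Times_Times_mult:
  fixes f :: "'a \<Rightarrow> 'b \<Rightarrow> 'r::comm_semiring_0"
  shows "(\<Sum>(a, b) \<in> (A1 \<times> A2) \<times> (B1 \<times> B2). f (fst a) (fst b) * g (snd a) (snd b))
     = (\<Sum>(a1, b1) \<in> A1 \<times> B1. f a1 b1) * (\<Sum>(a2, b2) \<in> A2 \<times> B2. g a2 b2)"
proof -
  have "(\<Sum>(a, b) \<in> (A1 \<times> A2) \<times> (B1 \<times> B2). f (fst a) (fst b) * g (snd a) (snd b))
      = (\<Sum>a1\<in>A1. \<Sum>a2\<in>A2. \<Sum>b1\<in>B1. \<Sum>b2\<in>B2. f a1 b1 * g a2 b2)"
    by (simp add: sum.cartesian_product')
  also have "\<dots> = (\<Sum>a1\<in>A1. \<Sum>b1\<in>B1. \<Sum>a2\<in>A2. \<Sum>b2\<in>B2. f a1 b1 * g a2 b2)"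
    by (rule sum.cong[OF refl], rule sum.swap)
  also have "\<dots> = (\<Sum>(a1, b1) \<in> A1 \<times> B1. f a1 b1) * (\<Sum>(a2, b2) \<in> A2 \<times> B2. g a2 b2)"
    unfolding sum.cartesian_product' sum_distrib_right by (simp add: sum_distrib_left)
  finally show ?thesis .
qed

lemma is_Jfun_prod:
  assumes JP: "is_Jfun P leP JP" and JQ: "is_Jfun Q leQ JQ"
  shows "is_Jfun (P \<times> Q) (prod_le leP leQ)
    (\<lambda>p q r. JP (fst p) (fst q) (fst r) * JQ (snd p) (snd q) (snd r))"
  unfolding is_Jfun_def split_paired_All fst_conv snd_conv
proof (intro conjI allI impI)
  fix x1 x2 y1 y2 z1 z2
  assume "((x1, x2), (y1, y2), (z1, z2)) \<notin> chains3 (P \<times> Q) (prod_le leP leQ)"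
  then show "JP x1 y1 z1 * JQ x2 y2 z2 = 0"
    using JP JQ by (auto simp: chains3_prod_iff is_Jfun_def)
next
  fix x1 x2 y1 y2 z1 z2
  assume "((x1, x2), (y1, y2), (z1, z2)) \<in> chains3 (P \<times> Q) (prod_le leP leQ)"
  then have chains: "(x1, y1, z1) \<in> chains3 P leP" "(x2, y2, z2) \<in> chains3 Q leQ"
    by (simp_all add: chains3_prod_iff)
  have "(\<Sum>(a, b) \<in> poset_interval (P \<times> Q) (prod_le leP leQ) (x1, x2) (y1, y2)
          \<times> poset_interval (P \<times> Q) (prod_le leP leQ) (y1, y2) (z1, z2).
          JP (fst a) y1 (fst b) * JQ (snd a) y2 (snd b))
      = (\<Sum>(a, b) \<in> (poset_interval P leP x1 y1 \<times> poset_interval Q leQ x2 y2)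
          \<times> (poset_interval P leP y1 z1 \<times> poset_interval Q leQ y2 z2).
          JP (fst a) y1 (fst b) * JQ (snd a) y2 (snd b))"
    (is "?lhs = _") by (simp add: poset_interval_prod)
  also have "\<dots> = (\<Sum>(a, b) \<in> poset_interval P leP x1 y1 \<times> poset_interval P leP y1 z1. JP a y1 b)
      * (\<Sum>(a, b) \<in> poset_interval Q leQ x2 y2 \<times> poset_interval Q leQ y2 z2. JQ a y2 b)"
    by (rule sum_Times_Times_mult)
  also have "\<dots> = delta3 (x1, x2) (y1, y2) (z1, z2)"
    using JP JQ chains by (simp add: is_Jfun_def delta3_prod)
  finally show "?lhs = delta3 (x1, x2) (y1, y2) (z1, z2)" .
qed

lemma Jfun_prod:
  assumes "finite_poset P leP" "finite_poset Q leQ"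
  shows "Jfun (P \<times> Q) (prod_le leP leQ) (x1, x2) (y1, y2) (z1, z2)
     = Jfun P leP x1 y1 z1 * Jfun Q leQ x2 y2 z2"
proof -
  have "Jfun (P \<times> Q) (prod_le leP leQ)
      = (\<lambda>p q r. Jfun P leP (fst p) (fst q) (fst r) * Jfun Q leQ (snd p) (snd q) (snd r))"
    using assms by (intro Jfun_unique finite_poset_prod is_Jfun_prod is_Jfun_Jfun)
  then show ?thesis by simp
qed

definition pair_triples :: "('a \<times> 'a \<times> 'a) \<times> ('b \<times> 'b \<times> 'b) \<Rightarrow> ('a \<times> 'b) \<times> ('a \<times> 'b) \<times> ('a \<times> 'b)" where
  "pair_triples = (\<lambda>((x1, y1, z1), (x2, y2, z2)). ((x1, x2), (y1, y2), (z1, z2)))"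

lemma bij_betw_pair_triples:
  "bij_betw pair_triples (chains3 P leP \<times> chains3 Q leQ) (chains3 (P \<times> Q) (prod_le leP leQ))"
proof (rule bij_betw_byWitness)
  define unpair :: "('a \<times> 'b) \<times> ('a \<times> 'b) \<times> ('a \<times> 'b) \<Rightarrow> ('a \<times> 'a \<times> 'a) \<times> ('b \<times> 'b \<times> 'b)"
    where "unpair = (\<lambda>((x1, x2), (y1, y2), (z1, z2)). ((x1, y1, z1), (x2, y2, z2)))"
  show "\<forall>s \<in> chains3 P leP \<times> chains3 Q leQ. unpair (pair_triples s) = s"
    by (auto simp: unpair_def pair_triples_def)
  show "\<forall>t \<in> chains3 (P \<times> Q) (prod_le leP leQ). pair_triples (unpair t) = t"
    by (auto simp: unpair_def pair_triples_def)
  show "pair_triples ` (chains3 P leP \<times> chains3 Q leQ) \<subseteq> chains3 (P \<times> Q) (prod_le leP leQ)"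
    by (auto simp: pair_triples_def chains3_prod_iff)
  show "unpair ` chains3 (P \<times> Q) (prod_le leP leQ) \<subseteq> chains3 P leP \<times> chains3 Q leQ"
    by (auto simp: unpair_def chains3_prod_iff)
qed

lemma rank_le_poset_rank: "finite A \<Longrightarrow> x \<in> A \<Longrightarrow> rk x \<le> poset_rank A rk"
  by (simp add: poset_rank_def)

lemma poset_rank_prod:
  assumes "finite P" "finite Q" "P \<noteq> {}" "Q \<noteq> {}"
  shows "poset_rank (P \<times> Q) (prod_rk rkP rkQ) = poset_rank P rkP + poset_rank Q rkQ"
proof -
  have "poset_rank P rkP \<in> rkP ` P"
    unfolding poset_rank_def using assms by (intro Max_in) auto
  then obtain p where p: "p \<in> P" "rkP p = poset_rank P rkP"
    by (metis imageE)
  have "poset_rank Q rkQ \<in> rkQ ` Q"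
    unfolding poset_rank_def using assms by (intro Max_in) auto
  then obtain q where q: "q \<in> Q" "rkQ q = poset_rank Q rkQ"
    by (metis imageE)
  show ?thesis
    unfolding poset_rank_def[of "P \<times> Q"]
  proof (rule Max_eqI)
    show "finite (prod_rk rkP rkQ ` (P \<times> Q))" using assms by simp
    show "r \<le> poset_rank P rkP + poset_rank Q rkQ" if "r \<in> prod_rk rkP rkQ ` (P \<times> Q)" for r
      using that assms by (auto simp: prod_rk_def intro!: add_mono rank_le_poset_rank)
    have "prod_rk rkP rkQ (p, q) = poset_rank P rkP + poset_rank Q rkQ"
      using p q by (simp add: prod_rk_def)
    then show "poset_rank P rkP + poset_rank Q rkQ \<in> prod_rk rkP rkQ ` (P \<times> Q)"
      using p q by (metis SigmaI image_eqI)
  qed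
qed

lemma int_rho:
  assumes "finite A" "x \<in> A" "y \<in> A" "z \<in> A"
  shows "int (rho A rk x y z) = 3 * int (poset_rank A rk) - int (rk x) - int (rk y) - int (rk z)"
proof -
  have "rk x \<le> poset_rank A rk" "rk y \<le> poset_rank A rk" "rk z \<le> poset_rank A rk"
    using assms by (simp_all add: rank_le_poset_rank)
  then show ?thesis
    unfolding rho_def by (simp only: of_nat_add of_nat_diff)
qed

lemma rho_prod:
  assumes "finite P" "finite Q" "x1 \<in> P" "y1 \<in> P" "z1 \<in> P" "x2 \<in> Q" "y2 \<in> Q" "z2 \<in> Q"
  shows "rho (P \<times> Q) (prod_rk rkP rkQ) (x1, x2) (y1, y2) (z1, z2)
     = rho P rkP x1 y1 z1 + rho Q rkQ x2 y2 z2"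
proof -
  have "poset_rank (P \<times> Q) (prod_rk rkP rkQ) = poset_rank P rkP + poset_rank Q rkQ"
    using assms by (intro poset_rank_prod) auto
  then have "int (rho (P \<times> Q) (prod_rk rkP rkQ) (x1, x2) (y1, y2) (z1, z2))
      = int (rho P rkP x1 y1 z1) + int (rho Q rkQ x2 y2 z2)"
    using assms by (simp add: int_rho prod_rk_def)
  then show ?thesis by linarith
qed

lemma Mpoly_prod:
  assumes "finite_poset P leP" "finite_poset Q leQ"
  shows "Mpoly (P \<times> Q) (prod_le leP leQ) (prod_rk rkP rkQ) = Mpoly P leP rkP * Mpoly Q leQ rkQ"
proof -
  have fin: "finite P" "finite Q"
    using assms by (simp_all add: finite_posetD(1))
  let ?term = "\<lambda>A le rk (x, y, z). monom (Jfun A le x y z) (rho A rk x y z)"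
  have term_prod: "?term (P \<times> Q) (prod_le leP leQ) (prod_rk rkP rkQ) (pair_triples (s1, s2))
      = ?term P leP rkP s1 * ?term Q leQ rkQ s2"
    if "s1 \<in> chains3 P leP" "s2 \<in> chains3 Q leQ" for s1 s2
  proof -
    obtain x1 y1 z1 x2 y2 z2 where s: "s1 = (x1, y1, z1)" "s2 = (x2, y2, z2)"
      by (cases s1, cases s2)
    have "x1 \<in> P" "y1 \<in> P" "z1 \<in> P" "x2 \<in> Q" "y2 \<in> Q" "z2 \<in> Q"
      using that by (simp_all add: s chains3_def)
    then show ?thesis
      using assms fin by (simp add: s pair_triples_def Jfun_prod rho_prod mult_monom)
  qed
  have "Mpoly (P \<times> Q) (prod_le leP leQ) (prod_rk rkP rkQ)
      = (\<Sum>s \<in> chains3 P leP \<times> chains3 Q leQ. ?term (P \<times> Q) (prod_le leP leQ) (prod_rk rkP rkQ) (pair_triples s))"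
    unfolding Mpoly_def by (rule sum.reindex_bij_betw[OF bij_betw_pair_triples, symmetric])
  also have "\<dots> = (\<Sum>(s1, s2) \<in> chains3 P leP \<times> chains3 Q leQ. ?term P leP rkP s1 * ?term Q leQ rkQ s2)"
    using term_prod by (intro sum.cong) auto
  also have "\<dots> = Mpoly P leP rkP * Mpoly Q leQ rkQ"
    by (simp add: Mpoly_def sum_product sum.cartesian_product)
  finally show ?thesis .
qed

theorem proposition6p6:
  fixes P :: "'a set" and leP :: "'a \<Rightarrow> 'a \<Rightarrow> bool" and rkP :: "'a \<Rightarrow> nat"
    and Q :: "'b set" and leQ :: "'b \<Rightarrow> 'b \<Rightarrow> bool" and rkQ :: "'b \<Rightarrow> nat"
  assumes "ranked_finite_poset P leP rkP"
    and "ranked_finite_poset Q leQ rkQ"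
  shows "Mpoly (P \<times> Q) (prod_le leP leQ) (prod_rk rkP rkQ) = Mpoly P leP rkP * Mpoly Q leQ rkQ"
  using assms by (intro Mpoly_prod) (simp_all add: ranked_finite_poset_def)

end
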